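(* For a triplet $P=(T,I,F)$ of nonempty intervals contained in $[0,1]$, with $T^L=\inf T$, $T^U=\sup T$ and similarly $I^L,I^U,F^L,F^U$, define Zhang's interval functions $$s^{Z}(P)=[T^L+2-I^U-F^U,\ T^U+2-I^L-F^L],$$ $$a^{Z}(P)=[\min\{T^L-F^L,T^U-F^U\},\ \max\{T^L-F^L,T^U-F^U\}],\qquad c^{Z}(P)=[T^L,T^U],$$ and the real-valued functions $$s(P)=\frac{4+T^L+T^U-I^L-I^U-F^L-F^U}{6},\quad a(P)=\frac{T^L+T^U-F^L-F^U}{2},\quad c(P)=\frac{T^L+T^U}{2}.$$ Rank intervals by their midpoints (a ranking equivalent to Xu and Da's possibility-degree ranking). Then for any two such triplets $P_1,P_2$ and each pair $(f^{Z},f)\in\{(s^Z,s),(a^Z,a),(c^Z,c)\}$: the midpoint of $f^Z(P_1)$ is greater than, less than, or equal to the midpoint of $f^Z(P_2)$ if and only if $f(P_1)$ is respectively greater than, less than, or equal to $f(P_2)$. Consequently, ranking interval neutrosophic triplets lexicographically by $(s^Z,a^Z,c^Z)$ (with intervals compared via midpoints) gives the same result as ranking them lexicographically by $(s,a,c)$.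
   Context: $s^Z,a^Z,c^Z$ are the interval neutrosophic score, accuracy and certainty functions of Hong-yu Zhang, Jian-qiang Wang and Xiao-hong Chen; $s,a,c$ are the paper's new interval neutrosophic score, accuracy and certainty functions. The midpoint of an interval with endpoints $u\le v$ is $(u+v)/2$. *)

theory Defs
  imports "HOL-Analysis.Analysis"
begin

text \<open>An interval neutrosophic triplet P = (T, I, F): three nonempty intervals in [0,1].
  Intervals of reals are represented as sets; closed result intervals as endpoint pairs.\<close>

type_synonym inn = "real set \<times> real set \<times> real set"

definition valid_int :: "real set \<Rightarrow> bool" where
  "valid_int X \<longleftrightarrow> is_interval X \<and> X \<noteq> {} \<and> X \<subseteq> {0..1}"

definition valid_inn :: "inn \<Rightarrow> bool" where
  "valid_inn P \<longleftrightarrow> (case P of (T, I, F) \<Rightarrow> valid_int T \<and> valid_int I \<and> valid_int F)"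

definition tL :: "inn \<Rightarrow> real" where "tL P = Inf (fst P)"
definition tU :: "inn \<Rightarrow> real" where "tU P = Sup (fst P)"
definition iL :: "inn \<Rightarrow> real" where "iL P = Inf (fst (snd P))"
definition iU :: "inn \<Rightarrow> real" where "iU P = Sup (fst (snd P))"
definition fL :: "inn \<Rightarrow> real" where "fL P = Inf (snd (snd P))"
definition fU :: "inn \<Rightarrow> real" where "fU P = Sup (snd (snd P))"

definition sZ :: "inn \<Rightarrow> real \<times> real" where
  "sZ P = (tL P + 2 - iU P - fU P, tU P + 2 - iL P - fL P)"
definition aZ :: "inn \<Rightarrow> real \<times> real" where
  "aZ P = (min (tL P - fL P) (tU P - fU P), max (tL P - fL P) (tU P - fU P))"
definition cZ :: "inn \<Rightarrow> real \<times> real" where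
  "cZ P = (tL P, tU P)"

definition midpoint_iv :: "real \<times> real \<Rightarrow> real" where
  "midpoint_iv X = (fst X + snd X) / 2"

definition s_new :: "inn \<Rightarrow> real" where
  "s_new P = (4 + tL P + tU P - iL P - iU P - fL P - fU P) / 6"
definition a_new :: "inn \<Rightarrow> real" where
  "a_new P = (tL P + tU P - fL P - fU P) / 2"
definition c_new :: "inn \<Rightarrow> real" where
  "c_new P = (tL P + tU P) / 2"

definition lex_less :: "real \<times> real \<times> real \<Rightarrow> real \<times> real \<times> real \<Rightarrow> bool" where
  "lex_less x y \<longleftrightarrow> fst x < fst y \<or> (fst x = fst y \<and>
     (fst (snd x) < fst (snd y) \<or> (fst (snd x) = fst (snd y) \<and> snd (snd x) < snd (snd y))))"

definition key_Z :: "inn \<Rightarrow> real \<times> real \<times> real" where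
  "key_Z P = (midpoint_iv (sZ P), midpoint_iv (aZ P), midpoint_iv (cZ P))"
definition key_new :: "inn \<Rightarrow> real \<times> real \<times> real" where
  "key_new P = (s_new P, a_new P, c_new P)"

end

(* The midpoint of each Zhang interval is a positive multiple of the corresponding new
   function: min + max of two numbers is their sum, so the midpoint of aZ is a, the midpoint
   of cZ is c, and the midpoint of sZ is 3 s. Positive rescaling preserves comparisons,
   hence also the lexicographic ranking. *)
theory Submission
  imports Defs
begin

lemma midpoint_sZ: "midpoint_iv (sZ P) = 3 * s_new P"
  by (simp add: midpoint_iv_def sZ_def s_new_def field_simps)

lemma midpoint_aZ: "midpoint_iv (aZ P) = a_new P"
  by (simp add: midpoint_iv_def aZ_def a_new_def min_def max_def field_simps)

lemma midpoint_cZ: "midpoint_iv (cZ P) = c_new P"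
  by (simp add: midpoint_iv_def cZ_def c_new_def)

lemma key_Z_eq: "key_Z P = (3 * s_new P, a_new P, c_new P)"
  by (simp add: key_Z_def midpoint_sZ midpoint_aZ midpoint_cZ)

lemma lex_less_scale_fst:
  assumes "(k :: real) > 0"
  shows "lex_less (k * x, y) (k * x', y') \<longleftrightarrow> lex_less (x, y) (x', y')"
  using assms by (simp add: lex_less_def)

theorem theorem10p5:
  assumes "valid_inn P1" and "valid_inn P2"
  shows "(\<forall>(fZ, f) \<in> {(sZ, s_new), (aZ, a_new), (cZ, c_new)}.
            (midpoint_iv (fZ P1) > midpoint_iv (fZ P2) \<longleftrightarrow> f P1 > f P2) \<and>
            (midpoint_iv (fZ P1) < midpoint_iv (fZ P2) \<longleftrightarrow> f P1 < f P2) \<and>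
            (midpoint_iv (fZ P1) = midpoint_iv (fZ P2) \<longleftrightarrow> f P1 = f P2))
       \<and> (lex_less (key_Z P1) (key_Z P2) \<longleftrightarrow> lex_less (key_new P1) (key_new P2))
       \<and> (lex_less (key_Z P2) (key_Z P1) \<longleftrightarrow> lex_less (key_new P2) (key_new P1))
       \<and> (key_Z P1 = key_Z P2 \<longleftrightarrow> key_new P1 = key_new P2)"
proof -
  have pointwise: "(midpoint_iv (fZ P1) > midpoint_iv (fZ P2) \<longleftrightarrow> f P1 > f P2) \<and>
      (midpoint_iv (fZ P1) < midpoint_iv (fZ P2) \<longleftrightarrow> f P1 < f P2) \<and>
      (midpoint_iv (fZ P1) = midpoint_iv (fZ P2) \<longleftrightarrow> f P1 = f P2)"
    if "(fZ, f) \<in> {(sZ, s_new), (aZ, a_new), (cZ, c_new)}" for fZ f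
    using that by (auto simp: midpoint_sZ midpoint_aZ midpoint_cZ)
  have "lex_less (key_Z P) (key_Z Q) \<longleftrightarrow> lex_less (key_new P) (key_new Q)" for P Q
    using lex_less_scale_fst[of 3] by (simp add: key_Z_eq key_new_def)
  moreover have "key_Z P1 = key_Z P2 \<longleftrightarrow> key_new P1 = key_new P2"
    by (simp add: key_Z_eq key_new_def)
  ultimately show ?thesis
    using pointwise by blast
qed

end
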